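(* Assume (a), (b) (for every dataset $z$), (d) and (e). Then the generalization error satisfies $$\bar{\bar G}(P_{\Theta|Z},P_Z)=\lambda\int\!\!\int\Big(f\Big(\frac{dP^{(Q,\lambda)}_{\Theta|Z=z}}{dQ}(\theta)\Big)+f^*\Big(-\frac{L_z(\theta)+N_{Q,z}(\lambda)}{\lambda}\Big)\Big)\Big(\frac{dP_{\Theta|Z=z}}{dP^{(Q,\lambda)}_{\Theta|Z=z}}(\theta)-\frac{dP_\Theta}{dP^{(Q,\lambda)}_{\Theta|Z=z}}(\theta)\Big)dQ(\theta)\,dP_Z(z).$$
   Context: Setting. - $\mathcal{M}\subseteq\mathbb{R}^d$; $h:\mathcal{M}\times\mathcal{X}\to\mathcal{Y}$; the loss $\ell:\mathcal{Y}\times\mathcal{Y}\to[0,\infty)$ satisfies $\ell(y,y)=0$. - For a dataset $z=((x_1,y_1),\dots,(x_n,y_n))\in(\mathcal{X}\times\mathcal{Y})^n$, $L_z(\theta)=\frac1n\sum_i\ell(h(\theta,x_i),y_i)$ and $R_z(P)=\int L_z\,dP$. - $Q$ is a Borel probability measure on $\mathcal{M}$, and $\triangle_Q(\mathcal{M})$ is the set of probability measures $P\ll Q$. Fix $\lambda>0$. - $f:[0,\infty)\to\mathbb{R}$ is convex with $f(1)=0$; $D_f(P\|Q)=\int f(\frac{dP}{dQ})dQ$. - $\dot f$ is the derivative of $f$ on $(0,\infty)$ and $\dot f^{-1}$ its inverse. - $f^*(t)=\sup_x(tx-f(x))$ is the Legendre–Fenchel transform. Assumptions. - (a) $f$ is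 strictly convex and differentiable. - (b) For the given $z$, there exists $\beta$ with $\dot f^{-1}\big(-\frac{\beta+L_z(\theta)}{\lambda}\big)>0$ on $\operatorname{supp}Q$ and $\int\dot f^{-1}\big(-\frac{\beta+L_z(\theta)}{\lambda}\big)dQ=1$. Normalization and solution. $N_{Q,z}(\lambda)$ denotes this $\beta$. $P^{(Q,\lambda)}_{\Theta|Z=z}$ is the unique minimizer of $R_z(P)+\lambda D_f(P\|Q)$ over $\triangle_Q(\mathcal{M})$, with density $\frac{dP^{(Q,\lambda)}_{\Theta|Z=z}}{dQ}(\theta)=\dot f^{-1}\big(-\frac{N_{Q,z}(\lambda)+L_z(\theta)}{\lambda}\big)$; it is mutually absolutely continuous with $Q$. Learning algorithm and generalization error. - $P_Z$ is a probability measure on $(\mathcal{X}\times\mathcal{Y})^n$. - $P_{\Theta|Z}$ is a conditional probability (learning algorithm) assigning to each dataset $z$ a probability measure $P_{\Theta|Z=z}$ on $\mathcal{M}$. - $P_\Theta(\mathcal{C})=\int P_{\Theta|Z=z}(\mathcal{C})\,dP_Z(z)$ for measurable $\mathcal{C}\subseteq\mathcal{M}$. - The generalization error is $\bar{\bar G}(P_{\Theta|Z},P_Z)=\int\!\int\big(R_u(P_{\Theta|Z=z})-R_z(P_{\Theta|Z=z})\big)dP_Z(u)\,dP_Z(z)$. Further assumptions. - (d) For all $z$, $P_{\Theta|Z=z}\ll P_\Theta$, and $P_\Theta\in\triangle_Q(\mathcal{M})$. - (e) $P_\Theta$ and $Q$ are mutually absolutely continuous. *)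

theory Defs
  imports "HOL-Probability.Probability"
begin

definition strictly_convex_on :: "real set \<Rightarrow> (real \<Rightarrow> real) \<Rightarrow> bool" where
  "strictly_convex_on A f \<longleftrightarrow>
     (\<forall>x\<in>A. \<forall>y\<in>A. \<forall>t::real. x \<noteq> y \<and> 0 < t \<and> t < 1 \<longrightarrow>
        f ((1 - t) * x + t * y) < (1 - t) * f x + t * f y)"

definition fdot_inv :: "(real \<Rightarrow> real) \<Rightarrow> real \<Rightarrow> real" where
  "fdot_inv f t = (THE x. 0 < x \<and> deriv f x = t)"

definition fstar :: "(real \<Rightarrow> real) \<Rightarrow> real \<Rightarrow> real" where
  "fstar f t = (SUP x\<in>{0..}. t * x - f x)"

definition emp_risk ::
  "('m \<Rightarrow> 'x \<Rightarrow> 'y) \<Rightarrow> ('y \<Rightarrow> 'y \<Rightarrow> real) \<Rightarrow> ('x \<times> 'y) list \<Rightarrow> 'm \<Rightarrow> real" where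
  "emp_risk h loss z \<theta> =
     (\<Sum>i<length z. loss (h \<theta> (fst (z ! i))) (snd (z ! i))) / real (length z)"

definition exp_risk ::
  "('m \<Rightarrow> 'x \<Rightarrow> 'y) \<Rightarrow> ('y \<Rightarrow> 'y \<Rightarrow> real) \<Rightarrow> ('x \<times> 'y) list \<Rightarrow> 'm measure \<Rightarrow> real" where
  "exp_risk h loss z P = (\<integral>\<theta>. emp_risk h loss z \<theta> \<partial>P)"

definition normalizer ::
  "(real \<Rightarrow> real) \<Rightarrow> 'm measure \<Rightarrow> real \<Rightarrow> ('m \<Rightarrow> real) \<Rightarrow> real" where
  "normalizer f Q lam Lz =
     (THE \<beta>. (AE \<theta> in Q. - (\<beta> + Lz \<theta>) / lam \<in> deriv f ` {0<..}) \<and>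
             (\<integral>\<theta>. fdot_inv f (- (\<beta> + Lz \<theta>) / lam) \<partial>Q) = 1)"

definition gibbs_density ::
  "(real \<Rightarrow> real) \<Rightarrow> 'm measure \<Rightarrow> real \<Rightarrow> ('m \<Rightarrow> real) \<Rightarrow> 'm \<Rightarrow> real" where
  "gibbs_density f Q lam Lz \<theta> = fdot_inv f (- (normalizer f Q lam Lz + Lz \<theta>) / lam)"

definition gibbs_measure ::
  "(real \<Rightarrow> real) \<Rightarrow> 'm measure \<Rightarrow> real \<Rightarrow> ('m \<Rightarrow> real) \<Rightarrow> 'm measure" where
  "gibbs_measure f Q lam Lz = density Q (\<lambda>\<theta>. ennreal (gibbs_density f Q lam Lz \<theta>))"

definition gen_error ::
  "('m \<Rightarrow> 'x \<Rightarrow> 'y) \<Rightarrow> ('y \<Rightarrow> 'y \<Rightarrow> real) \<Rightarrow> (('x \<times> 'y) list \<Rightarrow> 'm measure)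
     \<Rightarrow> ('x \<times> 'y) list measure \<Rightarrow> real" where
  "gen_error h loss K PZ =
     (\<integral>z. (\<integral>u. exp_risk h loss u (K z) - exp_risk h loss z (K z) \<partial>PZ) \<partial>PZ)"

end

theory Submission
  imports Defs
begin

(*
  Let s(\<theta>) = -(L_z(\<theta>) + N)/\<lambda> and let g = (f')^-1 \<circ> s be the density of the Gibbs
  measure G.  The Fenchel-Young equality f((f')^-1 s) + f*(s) = s (f')^-1 s turns the weight
  f(g) + f*(s) into s g, and g dP/dG = dP/dQ for every P << Q; so integrating the weight against
  dP/dG over Q gives the integral of s over P, namely -(N + R_z(P))/\<lambda>.  The normalizer cancels
  in the difference, so \<lambda> times the inner integral is R_z(P_\<Theta>) - R_z(P_\<Theta>|Z=z).  Since P_\<Theta> is the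
  mixture of the P_\<Theta>|Z=u, R_z(P_\<Theta>) is the average of R_z(P_\<Theta>|Z=u) over u, and Fubini
  exchanges the roles of u and z, which yields the generalization error.
  Measurability of (f')^-1 rests on the range of f' being an interval (Darboux).
*)

lemma strictly_convex_on_imp_convex_on:
  assumes "convex A" "strictly_convex_on A f"
  shows "convex_on A f"
  unfolding convex_on_def
proof (intro conjI assms ballI allI impI)
  fix x y u v :: real assume xy: "x \<in> A" "y \<in> A" and uv: "0 \<le> u" "0 \<le> v" "u + v = 1"
  show "f (u *\<^sub>R x + v *\<^sub>R y) \<le> u * f x + v * f y"
  proof (cases "x = y \<or> v = 0 \<or> v = 1")
    case True
    then show ?thesis using uv by (auto simp: algebra_simps simp flip: distrib_right)
  next
    case False
    then show ?thesis
      using assms(2) xy uv unfolding strictly_convex_on_def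
      by (smt (verit) real_scaleR_def)
  qed
qed

lemma DERIV_intermediate_value:
  fixes f f' :: "real \<Rightarrow> real"
  assumes "a < b" and der: "\<And>x. x \<in> {a..b} \<Longrightarrow> (f has_real_derivative f' x) (at x)"
    and "f' a < y" "y < f' b"
  shows "\<exists>c\<in>{a<..<b}. f' c = y"
proof -
  define \<phi> where "\<phi> x = f x - y * x" for x
  have d\<phi>: "(\<phi> has_real_derivative f' x - y) (at x)" if "x \<in> {a..b}" for x
    unfolding \<phi>_def using der[OF that] by (auto intro!: derivative_eq_intros)
  have "continuous_on {a..b} \<phi>"
    by (intro continuous_at_imp_continuous_on ballI DERIV_isCont[OF d\<phi>])
  then obtain c where c: "c \<in> {a..b}" and c_min: "\<And>x. x \<in> {a..b} \<Longrightarrow> \<phi> c \<le> \<phi> x"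
    using continuous_attains_inf[OF compact_Icc] \<open>a < b\<close>
    by (metis atLeastAtMost_iff empty_iff less_eq_real_def)
  have "c \<noteq> a"
  proof
    assume "c = a"
    obtain d where "d > 0" and d: "\<And>h. h > 0 \<Longrightarrow> h < d \<Longrightarrow> \<phi> (a + h) < \<phi> a"
      using DERIV_neg_dec_right[OF d\<phi>] assms
      by (metis atLeastAtMost_iff diff_less_0_iff_less order.refl order_less_imp_le)
    define h where "h = min (d/2) (b - a)"
    have "0 < h" "h < d" "a + h \<in> {a..b}" using \<open>d > 0\<close> \<open>a < b\<close> by (auto simp: h_def)
    with d c_min \<open>c = a\<close> show False by fastforce
  qed
  moreover have "c \<noteq> b"
  proof
    assume "c = b"
    obtain d where "d > 0" and d: "\<And>h. h > 0 \<Longrightarrow> h < d \<Longrightarrow> \<phi> (b - h) < \<phi> b"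
      using DERIV_pos_inc_left[OF d\<phi>] assms
      by (metis atLeastAtMost_iff diff_gt_0_iff_gt order.refl order_less_imp_le)
    define h where "h = min (d/2) (b - a)"
    have "0 < h" "h < d" "b - h \<in> {a..b}" using \<open>d > 0\<close> \<open>a < b\<close> by (auto simp: h_def)
    with d c_min \<open>c = b\<close> show False by fastforce
  qed
  ultimately have c_in: "c \<in> {a<..<b}" using c by auto
  have "f' c - y = 0"
  proof (rule DERIV_local_min[OF d\<phi>])
    show "c \<in> {a..b}" "0 < min (c - a) (b - c)" using c_in by auto
    show "\<forall>x. \<bar>c - x\<bar> < min (c - a) (b - c) \<longrightarrow> \<phi> c \<le> \<phi> x"
      using c_min by (auto simp: abs_if split: if_splits)
  qed
  then show ?thesis using c_in by auto
qed

lemma borel_measurable_fstar: "fstar f \<in> borel_measurable borel"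
proof -
  \<comment> \<open>fstar f is monotone on the down-closed set D where the supremum is finite;
    off D it is the constant junk value of Sup on an unbounded set\<close>
  define D where "D = {s. bdd_above ((\<lambda>x. s * x - f x) ` {0..})}"
  have D_downward: "s \<in> D" if "t \<in> D" "s \<le> t" for s t
  proof -
    obtain B where "\<And>x. x \<ge> 0 \<Longrightarrow> t * x - f x \<le> B"
      using \<open>t \<in> D\<close> unfolding D_def bdd_above_def by auto
    then have "\<And>x. x \<ge> 0 \<Longrightarrow> s * x - f x \<le> B"
      using mult_right_mono[OF \<open>s \<le> t\<close>] by (smt (verit))
    then show ?thesis unfolding D_def bdd_above_def by auto
  qed
  have "mono_on D (fstar f)"
  proof (rule mono_onI)
    fix s t assume "s \<in> D" "t \<in> D" "s \<le> t"
    then show "fstar f s \<le> fstar f t"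
      unfolding fstar_def by (intro cSUP_mono) (auto simp: D_def intro!: bexI mult_right_mono)
  qed
  then have "fstar f \<in> borel_measurable (restrict_space borel D)"
    by (rule borel_measurable_mono_on_fnc)
  moreover have "D \<in> sets borel"
    using D_downward by (intro real_interval_borel_measurable) (auto simp: is_interval_1)
  ultimately have "(\<lambda>s. if s \<in> D then fstar f s else (LEAST z::real. False))
      \<in> borel_measurable borel"
    by (subst measurable_restrict_space_iff[symmetric]) auto
  also have "(\<lambda>s. if s \<in> D then fstar f s else (LEAST z::real. False)) = fstar f"
  proof
    fix s show "(if s \<in> D then fstar f s else (LEAST z::real. False)) = fstar f s"
    proof (cases "s \<in> D")
      case False
      then have "(\<lambda>z. \<forall>y\<in>(\<lambda>x. s * x - f x) ` {0..}. y \<le> z) = (\<lambda>z. False)"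
        unfolding D_def bdd_above_def by (auto simp: fun_eq_iff)
      then show ?thesis using False unfolding fstar_def Sup_real_def by simp
    qed simp
  qed
  finally show ?thesis .
qed

lemma density_RN_deriv_density:
  fixes g :: "'a \<Rightarrow> real"
  assumes g[measurable]: "g \<in> borel_measurable Q" and g_pos: "AE x in Q. 0 < g x"
    and g_integrable: "integrable Q g"
    and M: "finite_measure M" "sets M = sets Q" "absolutely_continuous Q M"
  shows "M = density Q (\<lambda>x. g x * enn2real (RN_deriv (density Q g) M x))"
proof -
  define G where "G = density Q (\<lambda>x. ennreal (g x))"
  have "emeasure G (space G) = (\<integral>\<^sup>+x. ennreal (g x) \<partial>Q)"
    unfolding G_def by (simp add: emeasure_density cong: nn_integral_cong)
  also have "\<dots> = ennreal (\<integral>x. g x \<partial>Q)"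
    using g_integrable g_pos by (intro nn_integral_eq_integral) (auto elim: AE_mp)
  finally have "emeasure G (space G) = ennreal (\<integral>x. g x \<partial>Q)" .
  then interpret G: finite_measure G by (intro finite_measureI) simp
  have "absolutely_continuous G M"
    unfolding absolutely_continuous_def
  proof
    fix A assume "A \<in> null_sets G"
    then have "A \<in> sets Q" "AE x in Q. x \<in> A \<longrightarrow> ennreal (g x) = 0"
      unfolding G_def by (subst (asm) null_sets_density_iff; simp)+
    moreover from this(2) have "AE x in Q. x \<notin> A"
      using g_pos by eventually_elim auto
    ultimately have "A \<in> null_sets Q" by (simp add: AE_iff_null_sets)
    then show "A \<in> null_sets M" using M(3) unfolding absolutely_continuous_def by auto
  qed
  moreover have sets_M: "sets M = sets G" using M(2) by (simp add: G_def)
  ultimately have "M = density G (RN_deriv G M)"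
    by (simp add: G.density_RN_deriv)
  also have "\<dots> = density Q (\<lambda>x. ennreal (g x) * RN_deriv G M x)"
    unfolding G_def by (subst density_density_eq) auto
  also have "\<dots> = density Q (\<lambda>x. g x * enn2real (RN_deriv G M x))"
  proof (rule density_cong)
    have "AE x in G. RN_deriv G M x \<noteq> \<infinity>"
      using G.RN_deriv_finite finite_measure.sigma_finite_measure[OF M(1)]
        \<open>absolutely_continuous G M\<close> sets_M by blast
    then have "AE x in Q. 0 < g x \<longrightarrow> RN_deriv G M x \<noteq> \<infinity>"
      unfolding G_def by (subst (asm) AE_density) (auto elim: AE_mp)
    then show "AE x in Q.
        ennreal (g x) * RN_deriv G M x = ennreal (g x * enn2real (RN_deriv G M x))"
      using g_pos by eventually_elim (auto simp: ennreal_mult ennreal_enn2real less_top)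
  qed (auto simp: G_def)
  finally show ?thesis by (simp add: G_def)
qed

lemma integral_integral_diff_swap:
  fixes F :: "'a \<Rightarrow> 'a \<Rightarrow> real"
  assumes M: "prob_space M" and F: "integrable (M \<Otimes>\<^sub>M M) (case_prod F)" and B: "integrable M B"
  shows "(\<integral>z. (\<integral>u. F u z - B z \<partial>M) \<partial>M) = (\<integral>z. (\<integral>u. F z u \<partial>M) - B z \<partial>M)"
proof -
  interpret prob_space M by (rule M)
  interpret pair_sigma_finite M M ..
  have F_meas[measurable]: "case_prod F \<in> borel_measurable (M \<Otimes>\<^sub>M M)"
    and B_meas[measurable]: "B \<in> borel_measurable M"
    using F B by auto
  have "(\<integral>z. (\<integral>u. F u z - B z \<partial>M) \<partial>M) = (\<integral>z. (\<integral>u. F u z \<partial>M) - B z \<partial>M)"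
  proof (rule integral_cong_AE)
    show "AE z in M. (\<integral>u. F u z - B z \<partial>M) = (\<integral>u. F u z \<partial>M) - B z"
      using AE_integrable_snd[OF F] by eventually_elim (simp add: prob_space)
  qed measurable
  also have "\<dots> = (\<integral>z. (\<integral>u. F u z \<partial>M) \<partial>M) - (\<integral>z. B z \<partial>M)"
    by (rule Bochner_Integration.integral_diff[OF integrable_snd[OF F] B])
  also have "(\<integral>z. (\<integral>u. F u z \<partial>M) \<partial>M) = (\<integral>z. (\<integral>u. F z u \<partial>M) \<partial>M)"
    by (rule Fubini_integral[OF F])
  also have "(\<integral>z. (\<integral>u. F z u \<partial>M) \<partial>M) - (\<integral>z. B z \<partial>M) = (\<integral>z. (\<integral>u. F z u \<partial>M) - B z \<partial>M)"
    by (rule Bochner_Integration.integral_diff[OF integrable_fst[OF F] B, symmetric])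
  finally show ?thesis .
qed

lemma integral_bind_nonneg:
  fixes h :: "'b \<Rightarrow> real"
  assumes K[measurable]: "K \<in> M \<rightarrow>\<^sub>M subprob_algebra N" and h[measurable]: "h \<in> borel_measurable N"
    and nonneg: "\<And>x. 0 \<le> h x"
    and integrable_K: "\<And>z. z \<in> space M \<Longrightarrow> integrable (K z) h"
    and integrable_bind: "integrable (M \<bind> K) h"
  shows "(\<integral>x. h x \<partial>(M \<bind> K)) = (\<integral>z. (\<integral>x. h x \<partial>K z) \<partial>M)"
proof -
  have "ennreal (\<integral>x. h x \<partial>(M \<bind> K)) = (\<integral>\<^sup>+x. h x \<partial>(M \<bind> K))"
    using integrable_bind nonneg by (simp add: nn_integral_eq_integral)
  also have "\<dots> = (\<integral>\<^sup>+z. (\<integral>\<^sup>+x. h x \<partial>K z) \<partial>M)"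
    by (rule nn_integral_bind) measurable
  also have "\<dots> = (\<integral>\<^sup>+z. (\<integral>x. h x \<partial>K z) \<partial>M)"
    using integrable_K nonneg by (intro nn_integral_cong) (simp add: nn_integral_eq_integral)
  finally have nn_eq: "ennreal (\<integral>x. h x \<partial>(M \<bind> K)) = (\<integral>\<^sup>+z. (\<integral>x. h x \<partial>K z) \<partial>M)" .
  have "integrable M (\<lambda>z. \<integral>x. h x \<partial>K z)"
    using nn_eq[symmetric] nonneg by (intro integrableI_nonneg) (auto intro: integral_nonneg)
  with nn_eq nonneg show ?thesis
    by (simp add: nn_integral_eq_integral integral_nonneg integral_nonneg_AE)
qed

lemma emp_risk_nonneg:
  assumes "\<And>y y'. 0 \<le> loss y y'"
  shows "0 \<le> emp_risk h loss z \<theta>"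
  unfolding emp_risk_def using assms by (auto intro!: divide_nonneg_nonneg sum_nonneg)

lemma exp_risk_bind:
  assumes "K \<in> M \<rightarrow>\<^sub>M subprob_algebra N" "emp_risk h loss z \<in> borel_measurable N"
    and "\<And>y y'. 0 \<le> loss y y'"
    and "\<And>u. u \<in> space M \<Longrightarrow> integrable (K u) (emp_risk h loss z)"
    and "integrable (M \<bind> K) (emp_risk h loss z)"
  shows "exp_risk h loss z (M \<bind> K) = (\<integral>u. exp_risk h loss z (K u) \<partial>M)"
  unfolding exp_risk_def
  by (rule integral_bind_nonneg[OF assms(1,2) emp_risk_nonneg[OF assms(3)] assms(4,5)])

definition normalizing :: "(real \<Rightarrow> real) \<Rightarrow> 'a measure \<Rightarrow> real \<Rightarrow> ('a \<Rightarrow> real) \<Rightarrow> real \<Rightarrow> bool" where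
  "normalizing f Q lam Lz \<beta> \<longleftrightarrow>
     (AE \<theta> in Q. - (\<beta> + Lz \<theta>) / lam \<in> deriv f ` {0<..}) \<and>
     (\<integral>\<theta>. fdot_inv f (- (\<beta> + Lz \<theta>) / lam) \<partial>Q) = 1"

definition fenchel_weight :: "(real \<Rightarrow> real) \<Rightarrow> 'a measure \<Rightarrow> real \<Rightarrow> ('a \<Rightarrow> real) \<Rightarrow> 'a \<Rightarrow> real" where
  "fenchel_weight f Q lam Lz \<theta> =
     f (gibbs_density f Q lam Lz \<theta>) + fstar f (- (Lz \<theta> + normalizer f Q lam Lz) / lam)"

locale differentiable_strictly_convex =
  fixes f :: "real \<Rightarrow> real"
  assumes strictly_convex: "strictly_convex_on {0..} f"
    and differentiable: "\<And>x. x > 0 \<Longrightarrow> f differentiable (at x)"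
begin

abbreviation deriv_range :: "real set" where
  "deriv_range \<equiv> deriv f ` {0<..}"

lemma convex_on_nonneg: "convex_on {0..} f"
  by (rule strictly_convex_on_imp_convex_on[OF convex_real_interval(1) strictly_convex])

lemma has_real_derivative_deriv: "x > 0 \<Longrightarrow> (f has_real_derivative deriv f x) (at x)"
  using differentiable DERIV_deriv_iff_real_differentiable by blast

lemma above_tangent:
  assumes "x > 0" "y \<ge> 0"
  shows "f x + deriv f x * (y - x) \<le> f y"
proof -
  have "deriv f x * (y - x) \<le> f y - f x"
    using convex_on_imp_above_tangent[OF convex_on_nonneg _ _ _
        has_field_derivative_at_within[OF has_real_derivative_deriv]] assms
    by simp
  then show ?thesis by simp
qed

lemma deriv_strict_mono: "strict_mono_on {0<..} (deriv f)"
proof (rule strict_mono_onI)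
  fix x y :: real assume "x \<in> {0<..}" "y \<in> {0<..}" "x < y"
  then have "0 < x" "x < y" by auto
  have tangent_x: "f x + deriv f x * (y - x) \<le> f y" and tangent_y: "f y + deriv f y * (x - y) \<le> f x"
    using above_tangent \<open>0 < x\<close> \<open>x < y\<close> by auto
  then have "deriv f x * (y - x) \<le> deriv f y * (y - x)" by (simp add: algebra_simps)
  then have le: "deriv f x \<le> deriv f y" using \<open>x < y\<close> by simp
  show "deriv f x < deriv f y"
  proof (rule ccontr)
    assume "\<not> deriv f x < deriv f y"
    with le have "deriv f y * (x - y) = - (deriv f x * (y - x))" by (simp add: algebra_simps)
    with tangent_x tangent_y have affine: "f y = f x + deriv f x * (y - x)" by linarith
    define m where "m = (1 - 1/2) * x + 1/2 * y"
    have "f m < (f x + f y) / 2"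
      using strictly_convex[unfolded strictly_convex_on_def, rule_format, of x y "1/2"]
        \<open>0 < x\<close> \<open>x < y\<close>
      unfolding m_def by simp
    moreover have "f x + deriv f x * (m - x) \<le> f m"
      using above_tangent[OF \<open>0 < x\<close>, of m] \<open>0 < x\<close> \<open>x < y\<close> unfolding m_def by simp
    moreover have "deriv f x * (m - x) = deriv f x * (y - x) / 2"
      unfolding m_def by (simp add: algebra_simps)
    ultimately show False using affine by argo
  qed
qed

lemma deriv_range_interval: "is_interval deriv_range"
  unfolding is_interval_1
proof (intro ballI allI impI)
  fix a b s assume "a \<in> deriv_range" "b \<in> deriv_range" and s: "a \<le> s \<and> s \<le> b"
  then obtain p q where "p > 0" "q > 0" and a: "a = deriv f p" and b: "b = deriv f q" by auto
  show "s \<in> deriv_range"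
  proof (cases "s = a \<or> s = b")
    case False
    with s have "a < s" "s < b" by auto
    then have "deriv f p < deriv f q" unfolding a b by simp
    then have "p < q" using strict_mono_on_less[OF deriv_strict_mono] \<open>p > 0\<close> \<open>q > 0\<close> by simp
    moreover have "(f has_real_derivative deriv f x) (at x)" if "x \<in> {p..q}" for x
      using has_real_derivative_deriv that \<open>p > 0\<close> by simp
    ultimately obtain c where "c \<in> {p<..<q}" "deriv f c = s"
      using DERIV_intermediate_value[of p q f "deriv f" s] \<open>a < s\<close> \<open>s < b\<close> unfolding a b by blast
    with \<open>p > 0\<close> show ?thesis by force
  qed (use \<open>a \<in> deriv_range\<close> \<open>b \<in> deriv_range\<close> in auto)
qed

lemma fdot_inv_deriv:
  assumes "x > 0"
  shows "fdot_inv f (deriv f x) = x"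
  unfolding fdot_inv_def
proof (rule the_equality)
  show "\<And>y. 0 < y \<and> deriv f y = deriv f x \<Longrightarrow> y = x"
    using strict_mono_on_eqD[OF deriv_strict_mono] assms by auto
qed (use assms in simp)

lemma fdot_inv_in_deriv_range:
  assumes "s \<in> deriv_range"
  shows "fdot_inv f s > 0" and "deriv f (fdot_inv f s) = s"
  using assms fdot_inv_deriv by auto

lemma fdot_inv_outside_deriv_range:
  assumes "s \<notin> deriv_range"
  shows "fdot_inv f s = (THE x. False)"
proof -
  have "(\<lambda>x. 0 < x \<and> deriv f x = s) = (\<lambda>x. False)" using assms by auto
  then show ?thesis unfolding fdot_inv_def by simp
qed

lemma fdot_inv_strict_mono: "strict_mono_on deriv_range (fdot_inv f)"
proof (rule strict_mono_onI)
  fix s t assume "s \<in> deriv_range" "t \<in> deriv_range" "s < t"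
  then obtain x y where "x > 0" "y > 0" and s: "s = deriv f x" and t: "t = deriv f y" by auto
  then show "fdot_inv f s < fdot_inv f t"
    using strict_mono_on_less[OF deriv_strict_mono] \<open>s < t\<close> by (simp add: fdot_inv_deriv)
qed

lemma fenchel_young_eq:
  assumes "s \<in> deriv_range"
  shows "f (fdot_inv f s) + fstar f s = s * fdot_inv f s"
proof -
  define x where "x = fdot_inv f s"
  have "x > 0" "deriv f x = s" using fdot_inv_in_deriv_range[OF assms] by (auto simp: x_def)
  have "fstar f s = s * x - f x"
    unfolding fstar_def
  proof (rule cSup_eq_maximum)
    show "s * x - f x \<in> (\<lambda>y. s * y - f y) ` {0..}" using \<open>x > 0\<close> by simp
    show "z \<le> s * x - f x" if z: "z \<in> (\<lambda>y. s * y - f y) ` {0..}" for z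
    proof -
      obtain y where "y \<ge> 0" "z = s * y - f y" using z by auto
      moreover have "f x + s * (y - x) \<le> f y"
        using above_tangent[OF \<open>x > 0\<close> \<open>y \<ge> 0\<close>] \<open>deriv f x = s\<close> by simp
      ultimately show ?thesis by (simp add: right_diff_distrib)
    qed
  qed
  then show ?thesis by (simp add: x_def)
qed

lemma borel_measurable_fdot_inv: "fdot_inv f \<in> borel_measurable borel"
proof -
  have "fdot_inv f \<in> borel_measurable (restrict_space borel deriv_range)"
    by (rule borel_measurable_mono_on_fnc)
      (rule strict_mono_on_imp_mono_on[OF fdot_inv_strict_mono])
  then have "(\<lambda>s. if s \<in> deriv_range then fdot_inv f s else (THE x. False))
      \<in> borel_measurable borel"
    by (subst measurable_restrict_space_iff[symmetric])
      (auto intro: real_interval_borel_measurable deriv_range_interval)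
  also have "(\<lambda>s. if s \<in> deriv_range then fdot_inv f s else (THE x. False)) = fdot_inv f"
    using fdot_inv_outside_deriv_range by auto
  finally show ?thesis .
qed

lemma borel_measurable_fenchel_young: "(\<lambda>s. f (fdot_inv f s) + fstar f s) \<in> borel_measurable borel"
proof -
  have "deriv_range \<in> sets borel"
    by (rule real_interval_borel_measurable[OF deriv_range_interval])
  then have "(\<lambda>s. if s \<in> deriv_range then s * fdot_inv f s else f (THE x. False) + fstar f s)
      \<in> borel_measurable borel"
    using borel_measurable_fdot_inv borel_measurable_fstar by measurable
  also have "(\<lambda>s. if s \<in> deriv_range then s * fdot_inv f s else f (THE x. False) + fstar f s)
      = (\<lambda>s. f (fdot_inv f s) + fstar f s)"
    using fenchel_young_eq fdot_inv_outside_deriv_range by auto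
  finally show ?thesis .
qed

lemma normalizing_unique:
  assumes "prob_space Q" "lam > 0" "normalizing f Q lam Lz \<beta>\<^sub>1" "normalizing f Q lam Lz \<beta>\<^sub>2"
  shows "\<beta>\<^sub>1 = \<beta>\<^sub>2"
proof (rule ccontr)
  \<comment> \<open>a larger \<beta> gives a pointwise smaller density, so both cannot integrate to 1\<close>
  have less_impossible: False
    if "normalizing f Q lam Lz b" "normalizing f Q lam Lz c" "b < c" for b c
  proof -
    define g where "g \<beta> \<theta> = fdot_inv f (- (\<beta> + Lz \<theta>) / lam)" for \<beta> \<theta>
    have integral_g: "(\<integral>\<theta>. g b \<theta> \<partial>Q) = 1" "(\<integral>\<theta>. g c \<theta> \<partial>Q) = 1"
      using that unfolding normalizing_def g_def by auto
    then have integrable_g: "integrable Q (g b)" "integrable Q (g c)"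
      using not_integrable_integral_eq by fastforce+
    have "AE \<theta> in Q. - (b + Lz \<theta>) / lam \<in> deriv_range" "AE \<theta> in Q. - (c + Lz \<theta>) / lam \<in> deriv_range"
      using that unfolding normalizing_def by auto
    then have "AE \<theta> in Q. g c \<theta> < g b \<theta>"
    proof eventually_elim
      case (elim \<theta>)
      moreover have "- (c + Lz \<theta>) / lam < - (b + Lz \<theta>) / lam"
        using \<open>lam > 0\<close> \<open>b < c\<close> by (simp add: divide_strict_right_mono)
      ultimately show ?case
        unfolding g_def using strict_mono_onD[OF fdot_inv_strict_mono] by blast
    qed
    moreover have "(\<integral>\<theta>. g b \<theta> - g c \<theta> \<partial>Q) = 0"
      using integral_g integrable_g by simp
    ultimately have "AE \<theta> in Q. g b \<theta> - g c \<theta> = 0 \<and> g c \<theta> < g b \<theta>"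
      using integrable_g by (subst (asm) integral_nonneg_eq_0_iff_AE) (auto elim: AE_mp)
    then have "AE \<theta> in Q. False" by eventually_elim linarith
    then show False using prob_space.AE_False[OF \<open>prob_space Q\<close>] by simp
  qed
  assume "\<beta>\<^sub>1 \<noteq> \<beta>\<^sub>2"
  then show False using less_impossible assms(3,4) by (metis linorder_neqE_linordered_idom)
qed

lemma normalizing_normalizer:
  assumes "prob_space Q" "lam > 0" "normalizing f Q lam Lz \<beta>"
  shows "normalizing f Q lam Lz (normalizer f Q lam Lz)"
proof -
  have "\<exists>!\<beta>. normalizing f Q lam Lz \<beta>"
    using assms(3) normalizing_unique[OF assms(1,2)] by blast
  then have "normalizing f Q lam Lz (THE \<beta>. normalizing f Q lam Lz \<beta>)"
    by (rule theI')
  then show ?thesis by (simp add: normalizer_def normalizing_def)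
qed

lemma integral_fenchel_weight_RN_deriv:
  assumes Q: "prob_space Q" and lam: "lam > 0" and Lz[measurable]: "Lz \<in> borel_measurable Q"
    and normalizing: "normalizing f Q lam Lz \<beta>"
    and M: "prob_space M" "sets M = sets Q" "absolutely_continuous Q M"
    and Lz_integrable: "integrable M Lz"
  defines "r \<equiv> \<lambda>\<theta>. enn2real (RN_deriv (gibbs_measure f Q lam Lz) M \<theta>)"
  shows "integrable Q (\<lambda>\<theta>. fenchel_weight f Q lam Lz \<theta> * r \<theta>)"
    and "(\<integral>\<theta>. fenchel_weight f Q lam Lz \<theta> * r \<theta> \<partial>Q)
      = - (normalizer f Q lam Lz + (\<integral>\<theta>. Lz \<theta> \<partial>M)) / lam"
proof -
  interpret M: prob_space M by (rule M(1))
  define N where "N = normalizer f Q lam Lz"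
  define t where "t \<theta> = - (N + Lz \<theta>) / lam" for \<theta>
  define g where "g = gibbs_density f Q lam Lz"
  have g_t: "g \<theta> = fdot_inv f (t \<theta>)" for \<theta>
    by (simp add: g_def t_def N_def gibbs_density_def)
  have t_range: "AE \<theta> in Q. t \<theta> \<in> deriv_range" and integral_g: "(\<integral>\<theta>. g \<theta> \<partial>Q) = 1"
    using normalizing_normalizer[OF Q lam normalizing]
    by (simp_all add: normalizing_def g_t t_def N_def)
  have t_meas[measurable]: "t \<in> borel_measurable Q" unfolding t_def[abs_def] by measurable
  have g_meas[measurable]: "g \<in> borel_measurable Q"
    unfolding g_t[abs_def] using borel_measurable_fdot_inv by measurable
  have g_pos: "AE \<theta> in Q. 0 < g \<theta>"
    using t_range by eventually_elim (simp add: g_t fdot_inv_in_deriv_range)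
  have g_integrable: "integrable Q g" using integral_g not_integrable_integral_eq by fastforce
  have M_density: "M = density Q (\<lambda>\<theta>. g \<theta> * r \<theta>)"
    unfolding r_def gibbs_measure_def g_def[symmetric]
    using density_RN_deriv_density[OF g_meas g_pos g_integrable M.finite_measure_axioms M(2,3)] .
  have r_meas[measurable]: "r \<in> borel_measurable Q"
    unfolding r_def gibbs_measure_def by (simp cong: measurable_cong_sets)
  have gr_nonneg: "AE \<theta> in Q. 0 \<le> g \<theta> * r \<theta>"
    using g_pos by eventually_elim (simp add: r_def)
  have weight_t: "fenchel_weight f Q lam Lz \<theta> = f (fdot_inv f (t \<theta>)) + fstar f (t \<theta>)" for \<theta>
    by (simp add: fenchel_weight_def g_def[symmetric] g_t t_def N_def add.commute)
  have weight: "AE \<theta> in Q. fenchel_weight f Q lam Lz \<theta> * r \<theta> = (g \<theta> * r \<theta>) *\<^sub>R t \<theta>"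
    using t_range by eventually_elim (simp add: weight_t g_t fenchel_young_eq)
  have weight_meas: "(\<lambda>\<theta>. fenchel_weight f Q lam Lz \<theta> * r \<theta>) \<in> borel_measurable Q"
    unfolding weight_t using borel_measurable_fenchel_young by measurable
  have t_integrable: "integrable M t" unfolding t_def[abs_def] using Lz_integrable by auto
  then have "integrable Q (\<lambda>\<theta>. (g \<theta> * r \<theta>) *\<^sub>R t \<theta>)"
    unfolding M_density using gr_nonneg by (subst (asm) integrable_density) auto
  then show "integrable Q (\<lambda>\<theta>. fenchel_weight f Q lam Lz \<theta> * r \<theta>)"
    using integrable_cong_AE[OF weight_meas _ weight] by simp
  have "(\<integral>\<theta>. fenchel_weight f Q lam Lz \<theta> * r \<theta> \<partial>Q) = (\<integral>\<theta>. (g \<theta> * r \<theta>) *\<^sub>R t \<theta> \<partial>Q)"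
    using weight weight_meas by (intro integral_cong_AE) auto
  also have "\<dots> = (\<integral>\<theta>. t \<theta> \<partial>M)"
    unfolding M_density using gr_nonneg by (subst integral_density) auto
  also have "\<dots> = - (N + (\<integral>\<theta>. Lz \<theta> \<partial>M)) / lam"
    using Lz_integrable by (simp add: t_def M.prob_space)
  finally show "(\<integral>\<theta>. fenchel_weight f Q lam Lz \<theta> * r \<theta> \<partial>Q) = - (N + (\<integral>\<theta>. Lz \<theta> \<partial>M)) / lam" .
qed

lemma fenchel_weight_RN_deriv_diff:
  assumes Q: "prob_space Q" and lam: "lam > 0" and Lz: "Lz \<in> borel_measurable Q"
    and normalizing: "normalizing f Q lam Lz \<beta>"
    and M\<^sub>1: "prob_space M\<^sub>1" "sets M\<^sub>1 = sets Q" "absolutely_continuous Q M\<^sub>1" "integrable M\<^sub>1 Lz"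
    and M\<^sub>2: "prob_space M\<^sub>2" "sets M\<^sub>2 = sets Q" "absolutely_continuous Q M\<^sub>2" "integrable M\<^sub>2 Lz"
  shows "lam * (\<integral>\<theta>. fenchel_weight f Q lam Lz \<theta>
       * (enn2real (RN_deriv (gibbs_measure f Q lam Lz) M\<^sub>1 \<theta>)
          - enn2real (RN_deriv (gibbs_measure f Q lam Lz) M\<^sub>2 \<theta>)) \<partial>Q)
     = (\<integral>\<theta>. Lz \<theta> \<partial>M\<^sub>2) - (\<integral>\<theta>. Lz \<theta> \<partial>M\<^sub>1)"
  using integral_fenchel_weight_RN_deriv[OF Q lam Lz normalizing M\<^sub>1]
    integral_fenchel_weight_RN_deriv[OF Q lam Lz normalizing M\<^sub>2] lam
  by (simp add: right_diff_distrib Bochner_Integration.integral_diff field_simps)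

end

theorem theorem5:
  fixes Mset :: "(real ^ 'd) set"
    and Q :: "(real ^ 'd) measure"
    and h :: "real ^ 'd \<Rightarrow> 'x \<Rightarrow> 'y"
    and loss :: "'y \<Rightarrow> 'y \<Rightarrow> real"
    and f :: "real \<Rightarrow> real"
    and lam :: real
    and n :: nat
    and PZ :: "('x \<times> 'y) list measure"
    and K :: "('x \<times> 'y) list \<Rightarrow> (real ^ 'd) measure"
  defines "L \<equiv> emp_risk h loss"
    and "PTheta \<equiv> PZ \<bind> K"
  assumes Q_sets: "sets Q = sets (restrict_space borel Mset)"
    and Q_prob: "prob_space Q"
    and loss_nonneg: "\<And>y y'. loss y y' \<ge> 0"
    and loss_diag: "\<And>y. loss y y = 0"
    and lam_pos: "lam > 0"
    and f_convex: "convex_on {0..} f"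
    and f_one: "f 1 = 0"
    and f_strict: "strictly_convex_on {0..} f"
    and f_diff: "\<And>x. x > 0 \<Longrightarrow> f differentiable (at x)"
    and b_cond: "\<And>z. z \<in> space PZ \<Longrightarrow> \<exists>\<beta>.
         (AE \<theta> in Q. - (\<beta> + L z \<theta>) / lam \<in> deriv f ` {0<..}) \<and>
         (\<integral>\<theta>. fdot_inv f (- (\<beta> + L z \<theta>) / lam) \<partial>Q) = 1"
    and n_pos: "n > 0"
    and PZ_space: "space PZ = {z. length z = n}"
    and PZ_prob: "prob_space PZ"
    and K_kernel: "K \<in> measurable PZ (prob_algebra Q)"
    and L_meas: "(\<lambda>(z, \<theta>). L z \<theta>) \<in> borel_measurable (PZ \<Otimes>\<^sub>M Q)"
    and int_K: "\<And>u z. u \<in> space PZ \<Longrightarrow> z \<in> space PZ \<Longrightarrow> integrable (K z) (L u)"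
    and int_PTheta: "\<And>z. z \<in> space PZ \<Longrightarrow> integrable PTheta (L z)"
    and int_prod: "integrable (PZ \<Otimes>\<^sub>M PZ) (\<lambda>(u, z). exp_risk h loss u (K z))"
    and int_diag: "integrable PZ (\<lambda>z. exp_risk h loss z (K z))"
    and d_K: "\<And>z. z \<in> space PZ \<Longrightarrow> absolutely_continuous PTheta (K z)"
    and d_PTheta: "absolutely_continuous Q PTheta"
    and e_Q: "absolutely_continuous PTheta Q"
  shows "gen_error h loss K PZ =
    lam * (\<integral>z. (\<integral>\<theta>.
       (f (gibbs_density f Q lam (L z) \<theta>)
          + fstar f (- (L z \<theta> + normalizer f Q lam (L z)) / lam))
       * (enn2real (RN_deriv (gibbs_measure f Q lam (L z)) (K z) \<theta>)
          - enn2real (RN_deriv (gibbs_measure f Q lam (L z)) PTheta \<theta>)) \<partial>Q) \<partial>PZ)"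
proof -
  interpret differentiable_strictly_convex f using f_strict f_diff by unfold_locales
  have K_sub[measurable]: "K \<in> PZ \<rightarrow>\<^sub>M subprob_algebra Q"
    using K_kernel by (rule measurable_prob_algebraD)
  have K_z: "prob_space (K z)" "sets (K z) = sets Q" if "z \<in> space PZ" for z
    using measurable_space[OF K_kernel that] by (auto simp: space_prob_algebra)
  have PZ_point: "PZ \<in> space (prob_algebra PZ)" by (simp add: space_prob_algebra PZ_prob)
  have PTheta: "prob_space PTheta" "sets PTheta = sets Q"
    using prob_space_bind'[OF PZ_point K_kernel] sets_bind'[OF PZ_point K_kernel]
    by (auto simp: PTheta_def)
  have L_z: "L z \<in> borel_measurable Q" if "z \<in> space PZ" for z
    using measurable_Pair2[OF L_meas that] by simp
  let ?gap = "\<lambda>z. lam * (\<integral>\<theta>. fenchel_weight f Q lam (L z) \<theta>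
       * (enn2real (RN_deriv (gibbs_measure f Q lam (L z)) (K z) \<theta>)
          - enn2real (RN_deriv (gibbs_measure f Q lam (L z)) PTheta \<theta>)) \<partial>Q)"
  have gap: "?gap z = (\<integral>u. exp_risk h loss z (K u) \<partial>PZ) - exp_risk h loss z (K z)"
    if z: "z \<in> space PZ" for z
  proof -
    obtain \<beta> where "normalizing f Q lam (L z) \<beta>" using b_cond[OF z] by (auto simp: normalizing_def)
    moreover have "absolutely_continuous Q (K z)"
      using d_K[OF z] d_PTheta by (auto simp: absolutely_continuous_def)
    moreover have "exp_risk h loss z PTheta = (\<integral>u. exp_risk h loss z (K u) \<partial>PZ)"
      unfolding PTheta_def using L_z[OF z] loss_nonneg int_K[OF z] int_PTheta[OF z]
      by (intro exp_risk_bind[OF K_sub]) (auto simp: L_def PTheta_def)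
    ultimately show ?thesis
      using fenchel_weight_RN_deriv_diff[OF Q_prob lam_pos L_z[OF z]] K_z[OF z] int_K[OF z z] PTheta
        d_PTheta int_PTheta[OF z] by (simp add: exp_risk_def L_def)
  qed
  have "gen_error h loss K PZ
      = (\<integral>z. (\<integral>u. exp_risk h loss z (K u) \<partial>PZ) - exp_risk h loss z (K z) \<partial>PZ)"
    unfolding gen_error_def by (rule integral_integral_diff_swap[OF PZ_prob int_prod int_diag])
  also have "\<dots> = (\<integral>z. ?gap z \<partial>PZ)"
    using gap by (intro Bochner_Integration.integral_cong) auto
  finally show ?thesis by (simp add: fenchel_weight_def)
qed

end
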